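(* Let $\Lambda_h\subset\mathcal{N}_h^0$ be an arbitrary subset of interior nodes and let $v_h,w_h\in\mathbb{V}_h$ satisfy $$(-\Delta)^s_h[v_h](x_i)\ge(-\Delta)^s_h[w_h](x_i)\quad\forall x_i\in\Lambda_h,\qquad v_h(x_i)\ge w_h(x_i)\quad\forall x_i\in\mathcal{N}_h^0\setminus\Lambda_h.$$ Then $v_h\ge w_h$ in $\Omega$.
   Context: Let $n\ge1$, $s\in(0,1)$, and let $\Omega\subset\mathbb{R}^n$ be a bounded polygonal/polyhedral Lipschitz domain satisfying the exterior ball condition, with a conforming simplicial triangulation $\mathcal{T}_h$. Let $x_1,\dots,x_N$ be the interior nodes (nodes not on $\partial\Omega$), $\mathcal{N}_h^0$ their set, $\delta_i=\mathrm{dist}(x_i,\partial\Omega)$, and $h_i$ the local mesh size at $x_i$. Let $\mathbb{V}_h=\{v\in C(\mathbb{R}^n): v|_T\text{ affine for all }T\in\mathcal{T}_h,\ v=0\text{ on }\Omega^c\}$. For each interior node $x_i$ fix $H_i>0$ (typically $H_i=h_i^{\alpha_i}\delta_i^{1-\alpha_i}$, $\alpha_i\in[0,1]$), a star-shaped domain $\Omega_i\subset\Omega$ centered at $x_i$ containing the points $x_i\pm H_ie_j$ (e.g. the cube $x_i+[-H_i,H_i]^n$) and satisfying the symmetry conditions of Han–Wu–Zhou's monotone discretization, and a constant $\kappa_{n,s,i}>0$. For $v\in\mathbb{V}_h$ define $$(-\Delta)^s_h[v](x_i):=-\kappa_{n,s,i}\frac{\Delta_{FD}v(x_i;H_i)}{H_i^{2s}}+\int_{\Omega_i^c}\frac{v(x_i)-v(y)}{|x_i-y|^{n+2s}}\,dy,\qquad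 \Delta_{FD}v(x_i;H_i)=\sum_{j=1}^n\big(v(x_i+H_ie_j)-2v(x_i)+v(x_i-H_ie_j)\big),$$ where $e_j$ are the coordinate unit vectors. Standing fact (discrete barrier function): the function $b_h\in\mathbb{V}_h$ with $b_h(x_i)=1$ for all interior nodes satisfies $(-\Delta)^s_h[b_h](x_i)\ge C\delta_i^{-2s}>0$ for all $x_i\in\mathcal{N}_h^0$, with $C>0$ depending only on $s$ and $\Omega$. *)

theory Defs
  imports "HOL-Analysis.Analysis"
begin

text \<open>Bounded Lipschitz domain (locally the subgraph of a Lipschitz function
  in some unit direction e).\<close>
definition lipschitz_domain :: "(real^'n) set \<Rightarrow> bool" where
  "lipschitz_domain \<Omega> \<longleftrightarrow> open \<Omega> \<and> connected \<Omega> \<and> bounded \<Omega> \<and> \<Omega> \<noteq> {} \<and>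
     (\<forall>p\<in>frontier \<Omega>. \<exists>e r L (g :: real^'n \<Rightarrow> real).
        norm e = 1 \<and> r > 0 \<and> L-lipschitz_on UNIV g \<and>
        (\<forall>x t. g (x + t *\<^sub>R e) = g x) \<and>
        \<Omega> \<inter> ball p r = {x \<in> ball p r. x \<bullet> e < g x})"

definition exterior_ball_condition :: "(real^'n) set \<Rightarrow> bool" where
  "exterior_ball_condition \<Omega> \<longleftrightarrow>
     (\<exists>r>0. \<forall>p\<in>frontier \<Omega>. \<exists>c. dist p c = r \<and> ball c r \<inter> \<Omega> = {})"

definition conforming_triangulation :: "(real^'n) set set \<Rightarrow> (real^'n) set \<Rightarrow> bool" where
  "conforming_triangulation Th \<Omega> \<longleftrightarrow> finite Th \<and>
     (\<forall>T\<in>Th. (int CARD('n)) simplex T) \<and>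
     (\<Union>Th) = closure \<Omega> \<and>
     (\<forall>T1\<in>Th. \<forall>T2\<in>Th. (T1 \<inter> T2) face_of T1 \<and> (T1 \<inter> T2) face_of T2)"

definition mesh_nodes :: "(real^'n) set set \<Rightarrow> (real^'n) set" where
  "mesh_nodes Th = (\<Union>T\<in>Th. {x. x extreme_point_of T})"

definition interior_nodes :: "(real^'n) set set \<Rightarrow> (real^'n) set \<Rightarrow> (real^'n) set" where
  "interior_nodes Th \<Omega> = mesh_nodes Th - frontier \<Omega>"

definition Vh :: "(real^'n) set set \<Rightarrow> (real^'n) set \<Rightarrow> (real^'n \<Rightarrow> real) set" where
  "Vh Th \<Omega> = {v. continuous_on UNIV v \<and>
      (\<forall>T\<in>Th. \<exists>a b. \<forall>x\<in>T. v x = a \<bullet> x + b) \<and>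
      (\<forall>x. x \<notin> \<Omega> \<longrightarrow> v x = 0)}"

definition hwz_symmetric :: "real^'n \<Rightarrow> (real^'n) set \<Rightarrow> bool" where
  "hwz_symmetric x D \<longleftrightarrow>
     (\<forall>z j. x + z \<in> D \<longleftrightarrow> x + (\<chi> k. if k = j then - z $ k else z $ k) \<in> D) \<and>
     (\<forall>z i j. x + z \<in> D \<longleftrightarrow> x + (\<chi> k. z $ (Transposition.transpose i j k)) \<in> D)"

definition admissible_region :: "(real^'n) set \<Rightarrow> real^'n \<Rightarrow> real \<Rightarrow> (real^'n) set \<Rightarrow> bool" where
  "admissible_region \<Omega> x H D \<longleftrightarrow> open D \<and> connected D \<and> x \<in> D \<and>
     (\<forall>y\<in>D. closed_segment x y \<subseteq> D) \<and> D \<subseteq> \<Omega> \<and>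
     (\<forall>j. x + H *\<^sub>R axis j 1 \<in> D \<and> x - H *\<^sub>R axis j 1 \<in> D) \<and> hwz_symmetric x D"

definition Delta_FD :: "(real^'n \<Rightarrow> real) \<Rightarrow> real^'n \<Rightarrow> real \<Rightarrow> real" where
  "Delta_FD v x H = (\<Sum>j\<in>UNIV. v (x + H *\<^sub>R axis j 1) - 2 * v x + v (x - H *\<^sub>R axis j 1))"

text \<open>Discrete fractional Laplacian at node x (Han--Wu--Zhou monotone scheme).\<close>
definition frac_lap_h :: "real \<Rightarrow> real \<Rightarrow> real \<Rightarrow> (real^'n) set \<Rightarrow> (real^'n \<Rightarrow> real) \<Rightarrow> real^'n \<Rightarrow> real" where
  "frac_lap_h s \<kappa> H D v x =
     - \<kappa> * Delta_FD v x H / H powr (2 * s)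
     + (LINT y : (- D) | lborel. (v x - v y) / norm (x - y) powr (real CARD('n) + 2 * s))"

end

theory Submission
  imports Defs
begin

text \<open>If the maximum principle failed, \<open>u = w - v\<close> would have a positive maximum, and being
  piecewise affine it would attain it at a mesh node \<open>c\<close>. As \<open>u\<close> vanishes off \<open>\<Omega>\<close>, the node \<open>c\<close>
  is interior, hence in \<open>\<Lambda>\<close>. At a global maximum all centred second differences are nonpositive,
  and the nonlocal integrand is nonnegative and strictly positive off the bounded set \<open>\<Omega>\<close>, a set of
  positive measure. So the discrete operator of \<open>u\<close> is positive at \<open>c\<close>, against the hypothesis on
  \<open>\<Lambda>\<close>. The integrals exist because the tail of the kernel, summed over dyadic shells, is
  dominated by a geometric series.\<close>

lemma dyadic_shell_index:
  fixes d r :: real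
  assumes "0 < r" "r \<le> d"
  obtains k :: nat where "2 ^ k * r \<le> d" "d < 2 ^ Suc k * r"
proof -
  define l where "l = log 2 (d / r)"
  have dr: "1 \<le> d / r" using assms by simp
  define k where "k = nat \<lfloor>l\<rfloor>"
  have kl: "real k = of_int \<lfloor>l\<rfloor>" unfolding k_def l_def using dr by simp
  have "2 powr real k \<le> 2 powr l" using kl by simp
  then have "2 ^ k \<le> d / r" unfolding l_def using dr by (simp add: powr_realpow)
  moreover have "2 powr l < 2 powr (real k + 1)" using kl by simp
  then have "d / r < 2 ^ Suc k" unfolding l_def using dr by (simp add: powr_realpow powr_add)
  ultimately show ?thesis using that assms by (simp add: field_simps)
qed

lemma ennreal_le_suminf: "(f i :: ennreal) \<le> (\<Sum>k. f k)"
  by (metis ennreal_suminf_lessD not_le order.irrefl)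

lemma tail_kernel_le_dyadic_sum:
  fixes c y :: "'a::real_normed_vector"
  assumes "0 < r" "0 \<le> p"
  shows "ennreal (indicator {y. r \<le> norm (c - y)} y * norm (c - y) powr - p)
    \<le> (\<Sum>k. ennreal ((2 ^ k * r) powr - p) * indicator (ball c (2 ^ Suc k * r)) y)"
proof (cases "r \<le> norm (c - y)")
  case True
  then obtain k where k: "2 ^ k * r \<le> norm (c - y)" "norm (c - y) < 2 ^ Suc k * r"
    using dyadic_shell_index assms(1) by blast
  have "norm (c - y) powr - p \<le> (2 ^ k * r) powr - p"
    using k assms by (intro powr_mono2') auto
  then have "ennreal (indicator {y. r \<le> norm (c - y)} y * norm (c - y) powr - p)
      \<le> ennreal ((2 ^ k * r) powr - p) * indicator (ball c (2 ^ Suc k * r)) y"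
    using True k by (simp add: dist_norm ennreal_leI)
  also have "\<dots> \<le> (\<Sum>k. ennreal ((2 ^ k * r) powr - p) * indicator (ball c (2 ^ Suc k * r)) y)"
    by (rule ennreal_le_suminf)
  finally show ?thesis .
qed simp

lemma dyadic_ball_term_eq:
  fixes r q V :: real
  assumes "0 < r"
  shows "(2 ^ k * r) powr - (real n + q) * (V * (2 ^ Suc k * r) ^ n)
    = V * 2 ^ n * r powr - q * (2 powr - q) ^ k"
proof -
  define a where "a = 2 ^ k * r"
  have pos: "0 < a" using assms by (simp add: a_def)
  have "a powr - (real n + q) * a ^ n = a powr (- (real n + q) + real n)"
    using pos by (simp add: powr_realpow[symmetric] powr_add[symmetric])
  also have "\<dots> = (2 powr - q) ^ k * r powr - q"
    using assms by (simp add: a_def powr_mult powr_realpow[symmetric] powr_powr mult.commute powr_power)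
  finally have a: "a powr - (real n + q) * a ^ n = (2 powr - q) ^ k * r powr - q" .
  have "(2 ^ k * r) powr - (real n + q) * (V * (2 ^ Suc k * r) ^ n)
      = V * 2 ^ n * (a powr - (real n + q) * a ^ n)"
    by (simp add: a_def power_mult_distrib)
  then show ?thesis unfolding a by (simp only: ac_simps)
qed

lemma tail_kernel_nn_integral_finite:
  fixes c :: "'a::euclidean_space"
  assumes r: "0 < r" and q: "0 < q"
  shows "(\<integral>\<^sup>+y. ennreal (indicator {y. r \<le> norm (c - y)} y
           * norm (c - y) powr - (real DIM('a) + q)) \<partial>lborel) < \<infinity>"
proof -
  define V where "V = unit_ball_vol (real DIM('a))"
  define x where "x = (2::real) powr - q"
  have V0: "0 \<le> V" unfolding V_def by (simp add: unit_ball_vol_def)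
  have x: "0 \<le> x" "x < 1" unfolding x_def using q powr_less_mono[of "- q" 0 2] by auto
  \<comment> \<open>the k-th dyadic shell contributes a term of a geometric series of ratio \<open>2 powr - q\<close>\<close>
  have "(\<integral>\<^sup>+y. ennreal (indicator {y. r \<le> norm (c - y)} y
           * norm (c - y) powr - (real DIM('a) + q)) \<partial>lborel)
     \<le> (\<integral>\<^sup>+y. (\<Sum>k. ennreal ((2 ^ k * r) powr - (real DIM('a) + q))
           * indicator (ball c (2 ^ Suc k * r)) y) \<partial>lborel)"
    using r q by (intro nn_integral_mono tail_kernel_le_dyadic_sum[where p = "real DIM('a) + q"]) auto
  also have "\<dots> = (\<Sum>k. \<integral>\<^sup>+y. ennreal ((2 ^ k * r) powr - (real DIM('a) + q))
           * indicator (ball c (2 ^ Suc k * r)) y \<partial>lborel)"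
    by (intro nn_integral_suminf borel_measurable_times_ennreal borel_measurable_const
        borel_measurable_indicator) simp
  also have "\<dots> = (\<Sum>k. ennreal ((2 ^ k * r) powr - (real DIM('a) + q) * (V * (2 ^ Suc k * r) ^ DIM('a))))"
    using r V0 by (simp add: nn_integral_cmult_indicator emeasure_ball V_def ennreal_mult)
  also have "\<dots> = (\<Sum>k. ennreal (V * 2 ^ DIM('a) * r powr - q * x ^ k))"
    unfolding x_def using r by (simp only: dyadic_ball_term_eq)
  also have "\<dots> < \<infinity>"
  proof -
    have "summable (\<lambda>k. V * 2 ^ DIM('a) * r powr - q * x ^ k)"
      using x by (intro summable_mult summable_geometric) simp
    then show ?thesis using x V0 by (simp add: ennreal_suminf_neq_top less_top)
  qed
  finally show ?thesis .
qed

lemma tail_kernel_integrable: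
  fixes c :: "'a::euclidean_space"
  assumes "0 < r" "0 < q"
  shows "integrable lborel
    (\<lambda>y. indicator {y. r \<le> norm (c - y)} y * norm (c - y) powr - (real DIM('a) + q))"
  using assms by (intro integrableI_nonneg tail_kernel_nn_integral_finite) (auto simp: indicator_def)

lemma frac_lap_integrand_integrable:
  fixes g :: "real^'n \<Rightarrow> real"
  assumes cont: "continuous_on UNIV g" and bdd: "bounded (range g)"
    and D: "open D" "x \<in> D" and s: "0 < s"
  shows "set_integrable lborel (- D) (\<lambda>y. (g x - g y) / norm (x - y) powr (real CARD('n) + 2 * s))"
proof -
  define P where "P = real CARD('n) + 2 * s"
  obtain r where r: "0 < r" "ball x r \<subseteq> D" using D openE by blast
  obtain B where B: "\<And>y. \<bar>g y\<bar> \<le> B" using bdd by (auto simp: bounded_iff)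
  define K where "K y = indicator {y. r \<le> norm (x - y)} y * norm (x - y) powr - P" for y
  have "integrable lborel K"
    unfolding K_def P_def using tail_kernel_integrable[OF r(1), of "2 * s" x] s by simp
  then have dominant: "integrable lborel (\<lambda>y. 2 * B * K y)" by simp
  have "g \<in> borel_measurable lborel"
    using borel_measurable_continuous_onI[OF cont] by simp
  then have meas: "(\<lambda>y. indicator (- D) y *\<^sub>R ((g x - g y) / norm (x - y) powr P)) \<in> borel_measurable lborel"
    using D(1) by measurable
  have bound: "\<bar>indicator (- D) y * ((g x - g y) / norm (x - y) powr P)\<bar> \<le> \<bar>2 * B * K y\<bar>" for y
  proof (cases "y \<in> D")
    case False
    then have far: "r \<le> norm (x - y)" using r by (metis dist_norm mem_ball not_le subsetD)
    have "\<bar>g x - g y\<bar> \<le> 2 * B" using B[of x] B[of y] by linarith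
    then have "\<bar>g x - g y\<bar> * norm (x - y) powr - P \<le> 2 * B * norm (x - y) powr - P"
      by (intro mult_right_mono) auto
    moreover have "0 \<le> B" using B[of x] by linarith
    ultimately show ?thesis
      using False far r(1) by (simp add: K_def powr_minus abs_mult divide_inverse)
  qed simp
  show ?thesis
    unfolding set_integrable_def P_def[symmetric]
    by (rule Bochner_Integration.integrable_bound[OF dominant meas]) (use bound in simp)
qed

lemma bounded_range_vanishing_outside_bounded:
  fixes g :: "'a::euclidean_space \<Rightarrow> 'b::real_normed_vector"
  assumes "continuous_on UNIV g" "bounded S" "\<And>x. x \<notin> S \<Longrightarrow> g x = 0"
  shows "bounded (range g)"
proof -
  have "compact (g ` closure S)"
    using assms(2) by (intro compact_continuous_image continuous_on_subset[OF assms(1)]) auto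
  then have "bounded (insert 0 (g ` closure S))" by (simp add: compact_imp_bounded)
  moreover have "g x \<in> insert 0 (g ` closure S)" for x
    using assms(3)[of x] closure_subset by (cases "x \<in> S") auto
  ultimately show ?thesis by (meson bounded_subset image_subset_iff)
qed

lemma not_AE_in_bounded:
  fixes S :: "'a::euclidean_space set"
  assumes "bounded S"
  shows "\<not> (AE x in lborel. x \<in> S)"
proof
  assume AE: "AE x in lborel. x \<in> S"
  obtain R where R: "0 < R" "S \<subseteq> ball 0 R" using bounded_subset_ballD[OF assms] by blast
  obtain q :: 'a where q: "norm q = R + 1" using vector_choose_size[of "R + 1"] R(1) by auto
  have "y \<notin> S" if "y \<in> ball q 1" for y
    using that R(2) q norm_triangle_ineq2[of q y] by (auto simp: dist_norm)
  then have "AE x in lborel. x \<notin> ball q 1" using AE by (auto elim: eventually_mono)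
  then have "emeasure lborel (ball q 1) = 0" using AE_iff_null_sets[of "ball q 1" lborel] null_setsD1 by auto
  then show False using unit_ball_vol_pos[of "real DIM('a)"] by (simp add: emeasure_ball)
qed

lemma Delta_FD_diff: "Delta_FD (\<lambda>y. w y - v y) x H = Delta_FD w x H - Delta_FD v x H"
  unfolding Delta_FD_def by (simp add: sum_subtractf[symmetric] algebra_simps)

lemma Delta_FD_nonpos_at_max:
  assumes "\<And>y. u y \<le> u x"
  shows "Delta_FD u x H \<le> 0"
  unfolding Delta_FD_def
proof (intro sum_nonpos)
  fix j
  show "u (x + H *\<^sub>R axis j 1) - 2 * u x + u (x - H *\<^sub>R axis j 1) \<le> 0"
    using assms[of "x + H *\<^sub>R axis j 1"] assms[of "x - H *\<^sub>R axis j 1"] by linarith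
qed

lemma frac_lap_h_diff:
  fixes v w :: "real^'n \<Rightarrow> real"
  assumes "set_integrable lborel (- D) (\<lambda>y. (w x - w y) / norm (x - y) powr (real CARD('n) + 2 * s))"
    and "set_integrable lborel (- D) (\<lambda>y. (v x - v y) / norm (x - y) powr (real CARD('n) + 2 * s))"
  shows "frac_lap_h s \<kappa> H D (\<lambda>y. w y - v y) x = frac_lap_h s \<kappa> H D w x - frac_lap_h s \<kappa> H D v x"
proof -
  have split: "(w x - v x - (w y - v y)) / p = (w x - w y) / p - (v x - v y) / p" for y and p :: real
    by (simp add: diff_divide_distrib[symmetric] algebra_simps)
  have integral_diff:
    "(LINT y:- D|lborel. (w x - v x - (w y - v y)) / norm (x - y) powr (real CARD('n) + 2 * s))
      = (LINT y:- D|lborel. (w x - w y) / norm (x - y) powr (real CARD('n) + 2 * s))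
      - (LINT y:- D|lborel. (v x - v y) / norm (x - y) powr (real CARD('n) + 2 * s))"
    unfolding split using assms by (rule set_integral_diff)
  show ?thesis
    unfolding frac_lap_h_def Delta_FD_diff integral_diff by (simp add: right_diff_distrib diff_divide_distrib)
qed

lemma frac_lap_h_pos_at_positive_max:
  fixes u :: "real^'n \<Rightarrow> real"
  assumes "0 < s" "0 < \<kappa>" "0 < H" "open D" "x \<in> D" "D \<subseteq> \<Omega>" "bounded \<Omega>"
    and "continuous_on UNIV u" "\<And>y. y \<notin> \<Omega> \<Longrightarrow> u y = 0"
    and max: "\<And>y. u y \<le> u x" and pos: "0 < u x"
  shows "0 < frac_lap_h s \<kappa> H D u x"
proof -
  define f where
    "f = (\<lambda>y. indicator (- D) y * ((u x - u y) / norm (x - y) powr (real CARD('n) + 2 * s)))"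
  have "bounded (range u)" using assms by (intro bounded_range_vanishing_outside_bounded)
  then have int: "integrable lborel f"
    using frac_lap_integrand_integrable[of u D x s] assms unfolding f_def set_integrable_def by simp
  have frac_lap_eq: "frac_lap_h s \<kappa> H D u x = - \<kappa> * Delta_FD u x H / H powr (2 * s) + integral\<^sup>L lborel f"
    unfolding frac_lap_h_def set_lebesgue_integral_def f_def by simp
  have nonneg: "0 \<le> f y" for y using max[of y] by (simp add: f_def indicator_def)
  have "0 < f y" if "y \<notin> \<Omega>" for y
  proof -
    have "y \<notin> D" "y \<noteq> x" using that assms(5,6) by auto
    then show ?thesis using that assms(9) pos by (simp add: f_def)
  qed
  then have "\<not> (AE y in lborel. f y = 0)"
    using not_AE_in_bounded[OF assms(7)] by (metis (mono_tags) eventually_mono less_irrefl)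
  then have "integral\<^sup>L lborel f \<noteq> 0"
    using integral_nonneg_eq_0_iff_AE[OF int] nonneg by simp
  moreover have "0 \<le> integral\<^sup>L lborel f" using nonneg by simp
  ultimately have "0 < integral\<^sup>L lborel f" by simp
  moreover have "\<kappa> * Delta_FD u x H \<le> 0"
    using Delta_FD_nonpos_at_max[of u x H] max assms(2) by (simp add: mult_nonneg_nonpos)
  then have "0 \<le> - \<kappa> * Delta_FD u x H / H powr (2 * s)"
    using assms(3) by (simp add: divide_nonpos_pos)
  ultimately show ?thesis unfolding frac_lap_eq by linarith
qed

lemma VhD:
  assumes "v \<in> Vh Th \<Omega>"
  shows "continuous_on UNIV v" "x \<notin> \<Omega> \<Longrightarrow> v x = 0" "T \<in> Th \<Longrightarrow> \<exists>a b. \<forall>x\<in>T. v x = a \<bullet> x + b"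
  using assms unfolding Vh_def mem_Collect_eq by blast+

lemma Vh_bounded_range:
  assumes "bounded \<Omega>" "v \<in> Vh Th \<Omega>"
  shows "bounded (range v)"
  by (rule bounded_range_vanishing_outside_bounded[OF VhD(1)[OF assms(2)] assms(1) VhD(2)[OF assms(2)]])

lemma Vh_diff:
  assumes v: "v \<in> Vh Th \<Omega>" and w: "w \<in> Vh Th \<Omega>"
  shows "(\<lambda>x. w x - v x) \<in> Vh Th \<Omega>"
proof -
  have "\<exists>a b. \<forall>x\<in>T. w x - v x = a \<bullet> x + b" if "T \<in> Th" for T
  proof -
    obtain av bv where "\<forall>x\<in>T. v x = av \<bullet> x + bv" using VhD(3)[OF v \<open>T \<in> Th\<close>] by blast
    moreover obtain aw bw where "\<forall>x\<in>T. w x = aw \<bullet> x + bw" using VhD(3)[OF w \<open>T \<in> Th\<close>] by blast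
    ultimately have "\<forall>x\<in>T. w x - v x = (aw - av) \<bullet> x + (bw - bv)" by (simp add: inner_diff_left)
    then show ?thesis by blast
  qed
  moreover have "\<forall>x. x \<notin> \<Omega> \<longrightarrow> w x - v x = 0" using VhD(2)[OF v] VhD(2)[OF w] by simp
  ultimately show ?thesis
    using continuous_on_diff[OF VhD(1)[OF w] VhD(1)[OF v]] unfolding Vh_def mem_Collect_eq by blast
qed

lemma Vh_frac_lap_integrand_integrable:
  fixes v :: "real^'n \<Rightarrow> real"
  assumes "bounded \<Omega>" "v \<in> Vh Th \<Omega>" "open D" "x \<in> D" "0 < s"
  shows "set_integrable lborel (- D) (\<lambda>y. (v x - v y) / norm (x - y) powr (real CARD('n) + 2 * s))"
  using frac_lap_integrand_integrable[OF VhD(1)[OF assms(2)] Vh_bounded_range[OF assms(1,2)] assms(3-5)] .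

lemma inner_le_at_vertex:
  fixes a :: "'a::euclidean_space"
  assumes "finite C" "p \<in> convex hull C"
  obtains c where "c \<in> C" "a \<bullet> p \<le> a \<bullet> c"
proof -
  have "C \<noteq> {}" using assms(2) by auto
  define m where "m = Max ((\<lambda>c. a \<bullet> c) ` C)"
  have "convex hull C \<subseteq> {y. a \<bullet> y \<le> m}"
    unfolding m_def using assms(1) by (intro hull_minimal convex_halfspace_le) auto
  moreover have "m \<in> (\<lambda>c. a \<bullet> c) ` C" unfolding m_def using assms(1) \<open>C \<noteq> {}\<close> by (intro Max_in) auto
  ultimately show ?thesis using assms(2) that by auto
qed

lemma Vh_max_on_closure_at_mesh_node:
  assumes tri: "conforming_triangulation Th \<Omega>" and "bounded \<Omega>" "\<Omega> \<noteq> {}" and u: "u \<in> Vh Th \<Omega>"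
  obtains c where "c \<in> mesh_nodes Th" "\<And>y. y \<in> closure \<Omega> \<Longrightarrow> u y \<le> u c"
proof -
  obtain p where p: "p \<in> closure \<Omega>" "\<And>y. y \<in> closure \<Omega> \<Longrightarrow> u y \<le> u p"
    using continuous_attains_sup[of "closure \<Omega>" u] continuous_on_subset[OF VhD(1)[OF u]] assms(2,3)
    by (auto simp: compact_closure)
  obtain T where T: "T \<in> Th" "p \<in> T" using tri p(1) unfolding conforming_triangulation_def by blast
  obtain C where C: "\<not> affine_dependent C" "T = convex hull C"
    using tri T(1) unfolding conforming_triangulation_def simplex_def by blast
  obtain a b where ab: "\<forall>x\<in>T. u x = a \<bullet> x + b" using VhD(3)[OF u T(1)] by blast
  obtain c where c: "c \<in> C" "a \<bullet> p \<le> a \<bullet> c"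
    using inner_le_at_vertex[OF aff_independent_finite[OF C(1)]] T(2) C(2) by blast
  have "c \<in> T" using C(2) c(1) by (simp add: hull_inc)
  then have "u p \<le> u c" using ab T(2) c(2) by simp
  moreover have "c \<in> mesh_nodes Th" unfolding mesh_nodes_def
    using extreme_point_of_convex_hull_affine_independent C c(1) T(1) by blast
  ultimately show ?thesis using that p(2) by fastforce
qed

theorem lemma3p4:
  fixes \<Omega> :: "(real^'n) set"
    and Th :: "(real^'n) set set"
    and s :: real
    and H \<kappa> :: "real^'n \<Rightarrow> real"
    and \<Omega>i :: "real^'n \<Rightarrow> (real^'n) set"
    and \<Lambda> :: "(real^'n) set"
    and v w :: "real^'n \<Rightarrow> real"
  assumes "0 < s" "s < 1"
    and "lipschitz_domain \<Omega>"
    and "exterior_ball_condition \<Omega>"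
    and "conforming_triangulation Th \<Omega>"
    and "\<And>x. x \<in> interior_nodes Th \<Omega> \<Longrightarrow> H x > 0"
    and "\<And>x. x \<in> interior_nodes Th \<Omega> \<Longrightarrow> \<kappa> x > 0"
    and "\<And>x. x \<in> interior_nodes Th \<Omega> \<Longrightarrow> admissible_region \<Omega> x (H x) (\<Omega>i x)"
    and "\<Lambda> \<subseteq> interior_nodes Th \<Omega>"
    and "v \<in> Vh Th \<Omega>" "w \<in> Vh Th \<Omega>"
    and "\<And>x. x \<in> \<Lambda> \<Longrightarrow>
           frac_lap_h s (\<kappa> x) (H x) (\<Omega>i x) v x \<ge> frac_lap_h s (\<kappa> x) (H x) (\<Omega>i x) w x"
    and "\<And>x. x \<in> interior_nodes Th \<Omega> - \<Lambda> \<Longrightarrow> v x \<ge> w x"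
  shows "\<forall>x\<in>\<Omega>. v x \<ge> w x"
proof (rule ccontr)
  assume "\<not> (\<forall>x\<in>\<Omega>. w x \<le> v x)"
  then obtain x0 where x0: "x0 \<in> \<Omega>" "v x0 < w x0" by force
  define u where "u = (\<lambda>x. w x - v x)"
  have \<Omega>: "open \<Omega>" "bounded \<Omega>" using assms(3) unfolding lipschitz_domain_def by auto
  have u: "u \<in> Vh Th \<Omega>" unfolding u_def using assms(10,11) by (rule Vh_diff)
  obtain c where c: "c \<in> mesh_nodes Th" "\<And>y. y \<in> closure \<Omega> \<Longrightarrow> u y \<le> u c"
    using Vh_max_on_closure_at_mesh_node[OF assms(5) \<Omega>(2) _ u] x0(1) by blast
  have pos: "0 < u c" using c(2)[of x0] x0 closure_subset unfolding u_def by force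
  have max: "u y \<le> u c" for y using c(2)[of y] VhD(2)[OF u, of y] pos closure_subset by fastforce
  have "c \<in> \<Omega>" using VhD(2)[OF u] pos by force
  then have node: "c \<in> interior_nodes Th \<Omega>"
    using c(1) \<Omega>(1) by (simp add: interior_nodes_def frontier_def interior_open)
  then have "c \<in> \<Lambda>" using assms(13)[of c] pos unfolding u_def by force
  have D: "open (\<Omega>i c)" "c \<in> \<Omega>i c" "\<Omega>i c \<subseteq> \<Omega>"
    using assms(8)[OF node] unfolding admissible_region_def by auto
  have "0 < frac_lap_h s (\<kappa> c) (H c) (\<Omega>i c) u c"
    using frac_lap_h_pos_at_positive_max[OF assms(1) assms(7,6)[OF node] D \<Omega>(2) VhD(1)[OF u]]
      VhD(2)[OF u] max pos by blast
  also have "\<dots> = frac_lap_h s (\<kappa> c) (H c) (\<Omega>i c) w c - frac_lap_h s (\<kappa> c) (H c) (\<Omega>i c) v c"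
    unfolding u_def using assms(1,10,11) \<Omega>(2) D
    by (intro frac_lap_h_diff Vh_frac_lap_integrand_integrable) auto
  finally show False using assms(12)[OF \<open>c \<in> \<Lambda>\<close>] by simp
qed

end
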